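(* Let $G$ be a strategic game with players $1,\dots,n$. The $\mathcal{L}_\nu$-formula $$(\mathit{rat}_{gbr}\wedge\Box^*\mathit{rat}_{gbr})\rightarrow\nu X.\,O_{lsd}X$$ is a theorem of the proof system $\mathbf{R}$, where $gbr=(gbr_1,\dots,gbr_n)$ and $lsd=(lsd_1,\dots,lsd_n)$.
   Context: Strategic game $G=(T_1,\dots,T_n,<_1,\dots,<_n)$: arbitrary nonempty strategy sets $T_i$, $<_i$ a total linear order on $T=\prod_iT_i$, $\ge_i$ its reflexive closure; restriction $S=(S_1,\dots,S_n)$, $S_i\subseteq T_i$. $\mathcal{L}_O$: first-order formulas from atoms $C(a)$, $a\ge^i_cb$ ($a,b,c$ variables or constant $o$) with $\neg,\wedge,\exists$; abbreviations $\exists x\in C\,\phi:=\exists x(C(x)\wedge\phi)$, $\forall x\in C\,\phi:=\forall x(C(x)\to\phi)$. In an optimality model $(G,G',s)$ with assignment $\alpha$ ($o\mapsto s$): $C(x)$ iff $\alpha(x)_j\in G'_j$ for all $j$; $x\ge^i_zy$ iff $(\alpha(x)_i,\alpha(z)_{-i})\ge_i(\alpha(y)_i,\alpha(z)_{-i})$. Optimality condition for $i$: closed formula using only $\ge^i$; positive if every $C(\cdot)$ is under an even number of negations. Specific conditions: $gbr_i:=\exists z\in C\,\forall y\;o\ge^i_zy$ (global best response) and $lsd_i:=\forall y\in C\,\exists z\in C\;o\ge^i_zy$ (not locally strictly dominated). Belief model, $G_E$, and $\mathcal{L}_\nu$ with its semantics: $(\Omega,\bar s_1,\dots,\bar s_n,P_1,\dots,P_n)$;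 $(G_E)_i=\{\bar s_i(u):u\in E\}$; $\psi::=\mathit{rat}_{\phi_i}\mid X\mid\psi\wedge\psi\mid\neg\psi\mid\Box_i\psi\mid O_{\phi_i}\psi\mid\nu X.\psi$ ($\nu$-free body); $[\![\mathit{rat}_{\phi_i}]\!]_E=\{\omega:(G,G_{P_i(\omega)},\bar s(\omega))\models\phi_i\}$, $[\![X]\!]_E=E$, $[\![\Box_i\psi]\!]_E=\{\omega:P_i(\omega)\subseteq[\![\psi]\!]_E\}$, $[\![O_{\phi_i}\psi]\!]_E=\{\omega:(G,G_{[\![\psi]\!]_E},\bar s(\omega))\models\phi_i\}$, $[\![\nu X.\psi]\!]_E$ the transfinite-iteration outcome (starting from $\Omega$, intersections at limits) of $F\mapsto[\![\psi]\!]_F\cap F$. Abbreviations $\mathit{rat}_\phi,\Box\psi,O_\phi\psi$ as conjunctions over players and $\Box^*\psi:=\nu X.\Box(X\wedge\psi)$. Positive in $X$: each $X$ under an even number of negations and inside $O_{\phi_i}$ only for positive $\phi_i$. Proof system $\mathbf{P}$: propositional reasoning plus, for positive optimality conditions and $\psi$ positive in $X$: $\mathit{rat}_\phi\to(\Box\chi\to O_\phi\chi)$; $\nu X.\psi\to\psi[X\mapsto\nu X.\psi]$; from $\chi\to\psi[X\mapsto\chi]$ infer $\chi\to\nu X.\psi$. Proof system $\mathbf{R}$: $\mathbf{P}$ plus a standard first-order proof system for $\mathcal{L}_O$-formulas, plus the rules (Incl) from $\chi\to\psi$ infer $\nu X.\chi\to\nu X.\psi$, where $\chi$ is positive in $X$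 and $\psi$ is any $\nu$-free formula; and (Link) from $\phi_i\to\psi_i$ for all $i\in[1..n]$ (as $\mathcal{L}_O$-formulas) infer $O_\phi X\to O_\psi X$. *)

theory Defs
  imports Main
begin

datatype oterm = TV nat | TO

text \<open>Formulas of L_O built from C(a), a >=^i_c b (written Geq i a c b), negation,
  conjunction and existential quantification.\<close>
datatype oform =
    Cat oterm
  | Geq nat oterm oterm oterm
  | ONeg oform
  | OAnd oform oform
  | OEx nat oform

definition OImp :: "oform \<Rightarrow> oform \<Rightarrow> oform" where
  "OImp a b = ONeg (OAnd a (ONeg b))"

definition OAll :: "nat \<Rightarrow> oform \<Rightarrow> oform" where
  "OAll x a = ONeg (OEx x (ONeg a))"

definition OExC :: "nat \<Rightarrow> oform \<Rightarrow> oform" where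
  "OExC x a = OEx x (OAnd (Cat (TV x)) a)"

definition OAllC :: "nat \<Rightarrow> oform \<Rightarrow> oform" where
  "OAllC x a = OAll x (OImp (Cat (TV x)) a)"

fun tvars :: "oterm \<Rightarrow> nat set" where
  "tvars (TV x) = {x}"
| "tvars TO = {}"

fun ofv :: "oform \<Rightarrow> nat set" where
  "ofv (Cat a) = tvars a"
| "ofv (Geq i a c b) = tvars a \<union> tvars c \<union> tvars b"
| "ofv (ONeg p) = ofv p"
| "ofv (OAnd p q) = ofv p \<union> ofv q"
| "ofv (OEx x p) = ofv p - {x}"

fun only_player :: "nat \<Rightarrow> oform \<Rightarrow> bool" where
  "only_player i (Cat a) = True"
| "only_player i (Geq j a c b) = (j = i)"
| "only_player i (ONeg p) = only_player i p"
| "only_player i (OAnd p q) = (only_player i p \<and> only_player i q)"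
| "only_player i (OEx x p) = only_player i p"

definition opt_cond :: "nat \<Rightarrow> oform \<Rightarrow> bool" where
  "opt_cond i p \<longleftrightarrow> ofv p = {} \<and> only_player i p"

fun cpos :: "bool \<Rightarrow> oform \<Rightarrow> bool" where
  "cpos ev (Cat a) = ev"
| "cpos ev (Geq i a c b) = True"
| "cpos ev (ONeg p) = cpos (\<not> ev) p"
| "cpos ev (OAnd p q) = (cpos ev p \<and> cpos ev q)"
| "cpos ev (OEx x p) = cpos ev p"

definition positive_oc :: "oform \<Rightarrow> bool" where
  "positive_oc p \<longleftrightarrow> cpos True p"

fun tsubst :: "nat \<Rightarrow> oterm \<Rightarrow> oterm \<Rightarrow> oterm" where
  "tsubst x t (TV y) = (if y = x then t else TV y)"
| "tsubst x t TO = TO"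

fun osubst :: "nat \<Rightarrow> oterm \<Rightarrow> oform \<Rightarrow> oform" where
  "osubst x t (Cat a) = Cat (tsubst x t a)"
| "osubst x t (Geq i a c b) = Geq i (tsubst x t a) (tsubst x t c) (tsubst x t b)"
| "osubst x t (ONeg p) = ONeg (osubst x t p)"
| "osubst x t (OAnd p q) = OAnd (osubst x t p) (osubst x t q)"
| "osubst x t (OEx y p) = (if y = x then OEx y p else OEx y (osubst x t p))"

fun substitutable :: "nat \<Rightarrow> oterm \<Rightarrow> oform \<Rightarrow> bool" where
  "substitutable x t (Cat a) = True"
| "substitutable x t (Geq i a c b) = True"
| "substitutable x t (ONeg p) = substitutable x t p"
| "substitutable x t (OAnd p q) = (substitutable x t p \<and> substitutable x t q)"
| "substitutable x t (OEx y p) =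
     (y = x \<or> x \<notin> ofv p \<or> (y \<notin> tvars t \<and> substitutable x t p))"

fun opeval :: "(oform \<Rightarrow> bool) \<Rightarrow> oform \<Rightarrow> bool" where
  "opeval V (ONeg p) = (\<not> opeval V p)"
| "opeval V (OAnd p q) = (opeval V p \<and> opeval V q)"
| "opeval V p = V p"

definition otaut :: "oform \<Rightarrow> bool" where
  "otaut p \<longleftrightarrow> (\<forall>V. opeval V p)"

inductive fo_prov :: "oform \<Rightarrow> bool" where
  fo_taut: "otaut p \<Longrightarrow> fo_prov p"
| fo_exI: "substitutable x t p \<Longrightarrow> fo_prov (OImp (osubst x t p) (OEx x p))"
| fo_mp: "fo_prov (OImp p q) \<Longrightarrow> fo_prov p \<Longrightarrow> fo_prov q"
| fo_exE: "fo_prov (OImp p q) \<Longrightarrow> x \<notin> ofv q \<Longrightarrow> fo_prov (OImp (OEx x p) q)"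

text \<open>gbr_i := exists z in C. forall y. o >=^i_z y   (z = variable 0, y = variable 1)\<close>
definition gbr :: "nat \<Rightarrow> oform" where
  "gbr i = OExC 0 (OAll 1 (Geq i TO (TV 0) (TV 1)))"

definition lsd :: "nat \<Rightarrow> oform" where
  "lsd i = OAllC 1 (OExC 0 (Geq i TO (TV 0) (TV 1)))"

datatype nform =
    Rat nat oform
  | XV
  | NConj nform nform
  | NNeg nform
  | Box nat nform
  | Opt nat oform nform
  | Nu nform

definition NImp :: "nform \<Rightarrow> nform \<Rightarrow> nform" where
  "NImp a b = NNeg (NConj a (NNeg b))"

fun nufree :: "nform \<Rightarrow> bool" where
  "nufree (Rat i p) = True"
| "nufree XV = True"
| "nufree (NConj a b) = (nufree a \<and> nufree b)"
| "nufree (NNeg a) = nufree a"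
| "nufree (Box i a) = nufree a"
| "nufree (Opt i p a) = nufree a"
| "nufree (Nu a) = False"

fun nwf :: "nat \<Rightarrow> nform \<Rightarrow> bool" where
  "nwf n (Rat i p) = (1 \<le> i \<and> i \<le> n \<and> opt_cond i p)"
| "nwf n XV = True"
| "nwf n (NConj a b) = (nwf n a \<and> nwf n b)"
| "nwf n (NNeg a) = nwf n a"
| "nwf n (Box i a) = (1 \<le> i \<and> i \<le> n \<and> nwf n a)"
| "nwf n (Opt i p a) = (1 \<le> i \<and> i \<le> n \<and> opt_cond i p \<and> nwf n a)"
| "nwf n (Nu a) = (nufree a \<and> nwf n a)"

fun hasX :: "nform \<Rightarrow> bool" where
  "hasX (Rat i p) = False"
| "hasX XV = True"
| "hasX (NConj a b) = (hasX a \<or> hasX b)"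
| "hasX (NNeg a) = hasX a"
| "hasX (Box i a) = hasX a"
| "hasX (Opt i p a) = hasX a"
| "hasX (Nu a) = False"

fun xpos :: "bool \<Rightarrow> nform \<Rightarrow> bool" where
  "xpos ev (Rat i p) = True"
| "xpos ev XV = ev"
| "xpos ev (NConj a b) = (xpos ev a \<and> xpos ev b)"
| "xpos ev (NNeg a) = xpos (\<not> ev) a"
| "xpos ev (Box i a) = xpos ev a"
| "xpos ev (Opt i p a) = (xpos ev a \<and> (hasX a \<longrightarrow> positive_oc p))"
| "xpos ev (Nu a) = True"

definition positive_in_X :: "nform \<Rightarrow> bool" where
  "positive_in_X a \<longleftrightarrow> xpos True a"

fun substX :: "nform \<Rightarrow> nform \<Rightarrow> nform" where
  "substX c (Rat i p) = Rat i p"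
| "substX c XV = c"
| "substX c (NConj a b) = NConj (substX c a) (substX c b)"
| "substX c (NNeg a) = NNeg (substX c a)"
| "substX c (Box i a) = Box i (substX c a)"
| "substX c (Opt i p a) = Opt i p (substX c a)"
| "substX c (Nu a) = Nu a"

text \<open>Conjunction over a nonempty list.\<close>
fun bigconj :: "nform list \<Rightarrow> nform" where
  "bigconj [] = NNeg (NConj XV (NNeg XV))"
| "bigconj [a] = a"
| "bigconj (a # as) = NConj a (bigconj as)"

definition players :: "nat \<Rightarrow> nat list" where
  "players n = [1..<Suc n]"

definition rat_all :: "nat \<Rightarrow> (nat \<Rightarrow> oform) \<Rightarrow> nform" where
  "rat_all n phi = bigconj (map (\<lambda>i. Rat i (phi i)) (players n))"

definition box_all :: "nat \<Rightarrow> nform \<Rightarrow> nform" where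
  "box_all n a = bigconj (map (\<lambda>i. Box i a) (players n))"

definition opt_all :: "nat \<Rightarrow> (nat \<Rightarrow> oform) \<Rightarrow> nform \<Rightarrow> nform" where
  "opt_all n phi a = bigconj (map (\<lambda>i. Opt i (phi i) a) (players n))"

definition box_star :: "nat \<Rightarrow> nform \<Rightarrow> nform" where
  "box_star n a = Nu (box_all n (NConj XV a))"

fun npeval :: "(nform \<Rightarrow> bool) \<Rightarrow> nform \<Rightarrow> bool" where
  "npeval V (NNeg a) = (\<not> npeval V a)"
| "npeval V (NConj a b) = (npeval V a \<and> npeval V b)"
| "npeval V a = V a"

definition ntaut :: "nform \<Rightarrow> bool" where
  "ntaut a \<longleftrightarrow> (\<forall>V. npeval V a)"

definition pos_opt_conds :: "nat \<Rightarrow> (nat \<Rightarrow> oform) \<Rightarrow> bool" where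
  "pos_opt_conds n phi \<longleftrightarrow> (\<forall>i\<in>{1..n}. opt_cond i (phi i) \<and> positive_oc (phi i))"

inductive R_prov :: "nat \<Rightarrow> nform \<Rightarrow> bool" for n :: nat where
  R_taut: "nwf n a \<Longrightarrow> ntaut a \<Longrightarrow> R_prov n a"
| R_mp: "R_prov n (NImp a b) \<Longrightarrow> R_prov n a \<Longrightarrow> R_prov n b"
| R_rat: "pos_opt_conds n phi \<Longrightarrow> nwf n c \<Longrightarrow>
    R_prov n (NImp (rat_all n phi) (NImp (box_all n c) (opt_all n phi c)))"
| R_unfold: "nufree a \<Longrightarrow> nwf n a \<Longrightarrow> positive_in_X a \<Longrightarrow>
    R_prov n (NImp (Nu a) (substX (Nu a) a))"
| R_induct: "nufree a \<Longrightarrow> nwf n a \<Longrightarrow> positive_in_X a \<Longrightarrow> R_prov n (NImp c (substX c a)) \<Longrightarrow>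
    R_prov n (NImp c (Nu a))"
| R_incl: "nufree c \<Longrightarrow> positive_in_X c \<Longrightarrow> nufree b \<Longrightarrow> R_prov n (NImp c b) \<Longrightarrow>
    R_prov n (NImp (Nu c) (Nu b))"
| R_link: "(\<forall>i\<in>{1..n}. opt_cond i (phi i) \<and> opt_cond i (psi i) \<and> fo_prov (OImp (phi i) (psi i))) \<Longrightarrow>
    R_prov n (NImp (opt_all n phi XV) (opt_all n psi XV))"

end

theory Submission
  imports Defs
begin

(* The theorem is an instance of two general derivations in R.
   (1) For every profile phi of positive optimality conditions,
         rat_phi \<and> Box* rat_phi \<rightarrow> nu X. O_phi X.
       With S = Box* rat_phi and c = S \<and> rat_phi, unfolding S gives
       c \<rightarrow> Box c; the rationality axiom turns rat_phi \<and> Box c into O_phi c,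
       so c \<rightarrow> O_phi c, and the fixpoint induction rule yields c \<rightarrow> nu X. O_phi X.
   (2) If each phi_i \<rightarrow> psi_i is first-order provable, then (Link) and (Incl)
       give nu X. O_phi X \<rightarrow> nu X. O_psi X.
   Chaining (1) for gbr with (2) for gbr \<rightarrow> lsd, a small first-order
   derivation, proves the theorem. *)

lemma tsubst_same_var: "tsubst x (TV x) t = t"
  by (cases t) auto

lemma osubst_same_var: "osubst x (TV x) p = p"
  by (induction p) (auto simp: tsubst_same_var)

lemma substitutable_same_var: "substitutable x (TV x) p"
  by (induction p) auto

lemma fo_ex_self: "fo_prov (OImp p (OEx x p))"
  using fo_exI[OF substitutable_same_var, of x p] by (simp add: osubst_same_var)

lemma fo_taut_mp: "otaut (OImp a b) \<Longrightarrow> fo_prov a \<Longrightarrow> fo_prov b"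
  using fo_mp fo_taut by blast

text \<open>If z is in C and o is a best response to z against every y, then for every
  y in C some z in C (namely that z) makes o at least as good as y.\<close>
lemma gbr_imp_lsd: "fo_prov (OImp (gbr i) (lsd i))"
proof -
  define g where "g = Geq i TO (TV 0) (TV 1)"
  define best where "best = ONeg (OEx 1 (ONeg g))"
  define witness where "witness = OAnd (Cat (TV 0)) g"
  define dominated where "dominated = OImp (Cat (TV 1)) (OEx 0 witness)"
  have gbr_eq: "gbr i = OEx 0 (OAnd (Cat (TV 0)) best)"
    by (simp add: gbr_def OExC_def OAll_def best_def g_def)
  have lsd_eq: "lsd i = ONeg (OEx 1 (ONeg dominated))"
    by (simp add: lsd_def OAllC_def OAll_def OExC_def dominated_def witness_def g_def)
  text \<open>For fixed z and y: if y is not handled, z cannot be a best response in C.\<close>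
  have pointwise: "fo_prov (OImp (ONeg dominated) (ONeg (OAnd (Cat (TV 0)) best)))"
  proof -
    have "otaut (OImp (OImp (ONeg g) (OEx 1 (ONeg g)))
        (OImp (OImp witness (OEx 0 witness))
          (OImp (ONeg dominated) (ONeg (OAnd (Cat (TV 0)) best)))))"
      unfolding otaut_def dominated_def best_def witness_def g_def by (auto simp: OImp_def)
    then show ?thesis using fo_taut_mp fo_mp fo_ex_self by metis
  qed
  have "fo_prov (OImp (OEx 1 (ONeg dominated)) (ONeg (OAnd (Cat (TV 0)) best)))"
    by (rule fo_exE[OF pointwise]) (simp add: best_def g_def)
  moreover have "otaut (OImp (OImp (OEx 1 (ONeg dominated)) (ONeg (OAnd (Cat (TV 0)) best)))
      (OImp (OAnd (Cat (TV 0)) best) (ONeg (OEx 1 (ONeg dominated)))))"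
    unfolding otaut_def by (auto simp: OImp_def)
  ultimately have "fo_prov (OImp (OAnd (Cat (TV 0)) best) (ONeg (OEx 1 (ONeg dominated))))"
    using fo_taut_mp by blast
  then have "fo_prov (OImp (OEx 0 (OAnd (Cat (TV 0)) best)) (ONeg (OEx 1 (ONeg dominated))))"
    by (rule fo_exE) (simp add: dominated_def witness_def g_def OImp_def)
  then show ?thesis using gbr_eq lsd_eq by simp
qed

lemma opt_cond_gbr: "opt_cond i (gbr i)"
  by (simp add: opt_cond_def gbr_def OExC_def OAll_def)

lemma opt_cond_lsd: "opt_cond i (lsd i)"
  by (simp add: opt_cond_def lsd_def OExC_def OAll_def OAllC_def OImp_def) blast

lemma positive_gbr: "positive_oc (gbr i)"
  by (simp add: positive_oc_def gbr_def OExC_def OAll_def)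

lemma bigconj_players:
  assumes conj: "\<And>a b. P (NConj a b) = (P a \<and> P b)" and "1 \<le> n"
  shows "P (bigconj (map f (players n))) = (\<forall>i\<in>{1..n}. P (f i))"
proof -
  have "l \<noteq> [] \<Longrightarrow> P (bigconj l) = (\<forall>a\<in>set l. P a)" for l
    by (induction l rule: bigconj.induct) (auto simp: conj)
  moreover have "players n \<noteq> []" and "set (players n) = {1..n}"
    using \<open>1 \<le> n\<close> by (auto simp: players_def)
  ultimately show ?thesis by simp
qed

lemma substX_bigconj_players:
  assumes "1 \<le> n"
  shows "substX c (bigconj (map f (players n))) = bigconj (map (substX c \<circ> f) (players n))"
proof -
  have "l \<noteq> [] \<Longrightarrow> substX c (bigconj l) = bigconj (map (substX c) l)" for l
    by (induction l rule: bigconj.induct) auto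
  then show ?thesis using assms by (simp add: players_def)
qed

lemma closed_formula:
  assumes "\<not> hasX a"
  shows "substX c a = a" and "xpos ev a"
  using assms by (induction a arbitrary: ev) auto

lemma rat_all_syntax:
  assumes "1 \<le> n"
  shows "nufree (rat_all n phi)"
    and "\<not> hasX (rat_all n phi)"
    and "nwf n (rat_all n phi) \<longleftrightarrow> (\<forall>i\<in>{1..n}. opt_cond i (phi i))"
  using assms by (auto simp: rat_all_def bigconj_players[where P = nufree]
      bigconj_players[where P = "\<lambda>a. \<not> hasX a"] bigconj_players[where P = "nwf n"])

lemma box_all_syntax:
  assumes "1 \<le> n"
  shows "nufree (box_all n a) = nufree a"
    and "nwf n (box_all n a) = nwf n a"
    and "xpos ev (box_all n a) = xpos ev a"
    and "substX c (box_all n a) = box_all n (substX c a)"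
  using assms by (auto simp: box_all_def bigconj_players[where P = nufree]
      bigconj_players[where P = "nwf n"] bigconj_players[where P = "xpos ev"]
      substX_bigconj_players comp_def)

lemma opt_all_syntax:
  assumes "1 \<le> n"
  shows "nufree (opt_all n phi a) = nufree a"
    and "nwf n (opt_all n phi a) \<longleftrightarrow> (\<forall>i\<in>{1..n}. opt_cond i (phi i)) \<and> nwf n a"
    and "substX c (opt_all n phi a) = opt_all n phi (substX c a)"
  using assms by (auto simp: opt_all_def bigconj_players[where P = nufree]
      bigconj_players[where P = "nwf n"] substX_bigconj_players comp_def)

lemma opt_all_positive:
  assumes "1 \<le> n" and "\<forall>i\<in>{1..n}. positive_oc (phi i)"
  shows "positive_in_X (opt_all n phi XV)"
  using assms by (simp add: positive_in_X_def opt_all_def bigconj_players[where P = "xpos True"])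

lemma R_prop2:
  assumes "R_prov n p" "R_prov n q" "ntaut (NImp p (NImp q r))"
    and "nwf n p" "nwf n q" "nwf n r"
  shows "R_prov n r"
proof -
  have "R_prov n (NImp p (NImp q r))"
    using assms(3-6) by (intro R_taut) (simp_all add: NImp_def)
  then show ?thesis using assms(1,2) R_mp by blast
qed

lemma R_trans:
  assumes "R_prov n (NImp a b)" "R_prov n (NImp b c)" "nwf n a" "nwf n b" "nwf n c"
  shows "R_prov n (NImp a c)"
  using assms by (intro R_prop2[OF assms(1,2)]) (auto simp: NImp_def ntaut_def)

lemma box_star_unfold:
  assumes "1 \<le> n" "nufree A" "nwf n A" "\<not> hasX A"
  shows "R_prov n (NImp (box_star n A) (box_all n (NConj (box_star n A) A)))"
proof -
  have "R_prov n (NImp (box_star n A) (substX (box_star n A) (box_all n (NConj XV A))))"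
    unfolding box_star_def
    using assms by (intro R_unfold) (simp_all add: box_all_syntax closed_formula positive_in_X_def)
  then show ?thesis
    using assms by (simp add: box_all_syntax closed_formula box_star_def)
qed

lemma rat_common_belief_imp_nu_opt:
  assumes "1 \<le> n" and pos: "pos_opt_conds n phi"
  shows "R_prov n (NImp (NConj (rat_all n phi) (box_star n (rat_all n phi))) (Nu (opt_all n phi XV)))"
proof -
  define A where "A = rat_all n phi"
  define S where "S = box_star n A"
  define c where "c = NConj S A"
  have conds: "\<forall>i\<in>{1..n}. opt_cond i (phi i)" "\<forall>i\<in>{1..n}. positive_oc (phi i)"
    using pos by (auto simp: pos_opt_conds_def)
  have wf_A: "nufree A" "nwf n A" "\<not> hasX A"
    using assms conds by (simp_all add: A_def rat_all_syntax)
  have wf_S: "nwf n S"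
    using assms wf_A by (simp add: S_def box_star_def box_all_syntax)
  have wf: "nwf n c" "nwf n (box_all n c)" "nwf n (opt_all n phi c)"
    using assms wf_A wf_S conds by (simp_all add: c_def box_all_syntax opt_all_syntax)
  have unfold: "R_prov n (NImp S (box_all n c))"
    using box_star_unfold[OF assms(1) wf_A] by (simp add: S_def c_def)
  have rationality: "R_prov n (NImp A (NImp (box_all n c) (opt_all n phi c)))"
    unfolding A_def using R_rat[OF pos] wf(1) .
  text \<open>c is a post-fixpoint of O_phi ...\<close>
  have "R_prov n (NImp c (opt_all n phi c))"
    using R_prop2[OF rationality unfold] wf_A wf_S wf
    by (auto simp: NImp_def ntaut_def c_def)
  text \<open>... hence contained in its greatest fixpoint.\<close>
  then have "R_prov n (NImp c (Nu (opt_all n phi XV)))"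
    using assms conds by (intro R_induct) (simp_all add: opt_all_syntax opt_all_positive)
  moreover have "R_prov n (NImp (NConj A S) c)"
    using wf_A wf_S by (intro R_taut) (auto simp: c_def NImp_def ntaut_def)
  moreover have "nwf n (Nu (opt_all n phi XV))"
    using assms conds by (simp add: opt_all_syntax)
  ultimately show ?thesis
    using R_trans[of n "NConj A S" c] wf_A wf_S wf by (simp add: A_def S_def)
qed

lemma nu_opt_mono:
  assumes "1 \<le> n"
    and conds: "\<forall>i\<in>{1..n}. opt_cond i (phi i) \<and> opt_cond i (psi i) \<and> fo_prov (OImp (phi i) (psi i))"
    and pos: "\<forall>i\<in>{1..n}. positive_oc (phi i)"
  shows "R_prov n (NImp (Nu (opt_all n phi XV)) (Nu (opt_all n psi XV)))"
proof (rule R_incl)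
  show "R_prov n (NImp (opt_all n phi XV) (opt_all n psi XV))"
    using conds by (rule R_link)
qed (use assms in \<open>simp_all add: opt_all_syntax opt_all_positive\<close>)

theorem theorem2:
  fixes n :: nat
  assumes "1 \<le> n"
  shows "R_prov n (NImp (NConj (rat_all n gbr) (box_star n (rat_all n gbr))) (Nu (opt_all n lsd XV)))"
proof (rule R_trans)
  show "R_prov n (NImp (NConj (rat_all n gbr) (box_star n (rat_all n gbr))) (Nu (opt_all n gbr XV)))"
    using assms by (rule rat_common_belief_imp_nu_opt) (simp add: pos_opt_conds_def opt_cond_gbr positive_gbr)
  show "R_prov n (NImp (Nu (opt_all n gbr XV)) (Nu (opt_all n lsd XV)))"
    using assms by (rule nu_opt_mono) (simp_all add: opt_cond_gbr opt_cond_lsd gbr_imp_lsd positive_gbr)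
qed (use assms in \<open>simp_all add: rat_all_syntax box_all_syntax opt_all_syntax box_star_def
                                 opt_cond_gbr opt_cond_lsd\<close>)

end
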